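(* Let $q\ge 4$ be a prime power and $\mathcal{K}$ a set of $q(q-2)$ points in $\mathrm{PG}(2,q)$. Then there exists a line $L$ with $|L\cap\mathcal{K}|\notin\{0,q-2,q-1\}$.
   Context: $\mathrm{PG}(2,q)$ is the projective plane of $\mathbb{F}_q^3$; points are $1$-dimensional and lines $2$-dimensional subspaces. *)

theory Defs
  imports "HOL-Analysis.Analysis"
begin

text \<open>The projective plane PG(2,q) over a finite field 'a with q = CARD('a) elements.
  Points are 1-dimensional subspaces of 'a^3, lines are 2-dimensional subspaces,
  both represented as sets of vectors.\<close>

definition pg_point :: "('a::field ^ 3) set \<Rightarrow> bool" where
  "pg_point P \<longleftrightarrow> (\<exists>v. v \<noteq> 0 \<and> P = {c *s v | c. True})"

definition pg_line :: "('a::field ^ 3) set \<Rightarrow> bool" where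
  "pg_line L \<longleftrightarrow> (\<exists>u w. (\<forall>a b. a *s u + b *s w = 0 \<longrightarrow> a = 0 \<and> b = 0)
                      \<and> L = {a *s u + b *s w | a b. True})"

definition line_meet_card :: "('a::field ^ 3) set \<Rightarrow> ('a ^ 3) set set \<Rightarrow> nat" where
  "line_meet_card L K = card {P \<in> K. P \<subseteq> L}"

end

theory Submission
  imports Defs
begin

text \<open>Suppose every line meets \<open>K\<close> in \<open>0\<close>, \<open>q - 2\<close> or \<open>q - 1\<close> points. The \<open>q + 1\<close> lines
  through a point \<open>P \<in> K\<close> partition the remaining \<open>q(q - 2) - 1\<close> points of \<open>K\<close>, and each of
  them carries \<open>q - 3\<close> or \<open>q - 2\<close> of these; hence exactly two of them are \<open>(q - 1)\<close>-secants.
  Counting incidences between \<open>K\<close> and the \<open>(q - 1)\<close>-secants gives \<open>(q - 1) b = 2q(q - 2)\<close>, which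
  is impossible since \<open>2q(q - 2) \<equiv> -2 (mod q - 1)\<close> and \<open>q - 1 \<ge> 3\<close>.\<close>

definition span1 :: "'a::field^3 \<Rightarrow> ('a^3) set" where
  "span1 p = {c *s p | c. True}"

definition span2 :: "'a::field^3 \<Rightarrow> 'a^3 \<Rightarrow> ('a^3) set" where
  "span2 u w = {a *s u + b *s w | a b. True}"

definition indep2 :: "'a::field^3 \<Rightarrow> 'a^3 \<Rightarrow> bool" where
  "indep2 u w \<longleftrightarrow> (\<forall>a b. a *s u + b *s w = 0 \<longrightarrow> a = 0 \<and> b = 0)"

lemma pg_point_iff_span1: "pg_point P \<longleftrightarrow> (\<exists>p. p \<noteq> 0 \<and> P = span1 p)"
  unfolding pg_point_def span1_def by auto

lemma pg_line_iff_span2: "pg_line L \<longleftrightarrow> (\<exists>u w. indep2 u w \<and> L = span2 u w)"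
  unfolding pg_line_def indep2_def span2_def by auto

lemma self_in_span1: "p \<in> span1 p"
  unfolding span1_def by (auto intro: exI[of _ 1])

lemma span1_eq_if_mem:
  fixes p :: "'a::field^3"
  assumes "x \<in> span1 p" "x \<noteq> 0"
  shows "span1 x = span1 p"
proof -
  obtain c where x: "x = c *s p" using assms(1) unfolding span1_def by auto
  with assms(2) have "c \<noteq> 0" by auto
  show ?thesis unfolding span1_def
  proof auto
    fix d show "\<exists>e. d *s x = e *s p" using x by (auto simp: vec_eq_iff)
  next
    fix d show "\<exists>e. d *s p = e *s x" using x \<open>c \<noteq> 0\<close>
      by (intro exI[of _ "d / c"]) (auto simp: vec_eq_iff)
  qed
qed

lemma card_span1:
  fixes p :: "'a::{finite,field}^3"
  assumes "p \<noteq> 0"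
  shows "card (span1 p) = CARD('a)"
proof -
  obtain i where i: "p $ i \<noteq> 0" using assms by (auto simp: vec_eq_iff)
  have "inj (\<lambda>c. c *s p)"
    by (rule injI) (use i in \<open>auto simp: vec_eq_iff\<close>)
  moreover have "span1 p = range (\<lambda>c. c *s p)" unfolding span1_def by auto
  ultimately show ?thesis by (simp add: card_image)
qed

lemma indep2_if_notin_span1:
  assumes "p \<noteq> 0" "x \<notin> span1 p"
  shows "indep2 p x"
  unfolding indep2_def
proof (intro allI impI)
  fix a b assume comb: "a *s p + b *s x = 0"
  show "a = 0 \<and> b = 0"
  proof (cases "b = 0")
    case True
    obtain i where "p $ i \<noteq> 0" using assms(1) by (auto simp: vec_eq_iff)
    with comb True show ?thesis by (auto simp: vec_eq_iff)
  next
    case False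
    from comb have "\<forall>i. a * p$i + b * x$i = 0" by (simp add: vec_eq_iff)
    with False have "x = (- a / b) *s p" by (simp add: vec_eq_iff field_simps add_eq_0_iff2)
    with assms(2) show ?thesis unfolding span1_def by blast
  qed
qed

lemma card_span2:
  fixes u w :: "'a::{finite,field}^3"
  assumes "indep2 u w"
  shows "card (span2 u w) = CARD('a)^2"
proof -
  have "inj (\<lambda>(a, b). a *s u + b *s w)"
  proof (rule injI, clarify)
    fix a b a' b' :: 'a
    assume "a *s u + b *s w = a' *s u + b' *s w"
    hence "(a - a') *s u + (b - b') *s w = 0" by (simp add: vec_eq_iff algebra_simps)
    with assms show "a = a' \<and> b = b'" unfolding indep2_def by fastforce
  qed
  moreover have "span2 u w = range (\<lambda>(a, b). a *s u + b *s w)" unfolding span2_def by auto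
  ultimately show ?thesis by (simp add: card_image power2_eq_square)
qed

lemma span2_lin_comb:
  assumes "x \<in> span2 u w" "y \<in> span2 u w"
  shows "a *s x + b *s y \<in> span2 u w"
proof -
  obtain a1 b1 a2 b2 where "x = a1 *s u + b1 *s w" "y = a2 *s u + b2 *s w"
    using assms unfolding span2_def by auto
  hence "a *s x + b *s y = (a * a1 + b * a2) *s u + (a * b1 + b * b2) *s w"
    by (simp add: vec_eq_iff algebra_simps)
  thus ?thesis unfolding span2_def by blast
qed

lemma span2_eq_if_mem:
  fixes u w :: "'a::{finite,field}^3"
  assumes "indep2 u w" "indep2 p x" "p \<in> span2 u w" "x \<in> span2 u w"
  shows "span2 p x = span2 u w"
proof (rule card_subset_eq)
  show "span2 p x \<subseteq> span2 u w"
    using span2_lin_comb[OF assms(3,4)] unfolding span2_def by auto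
qed (simp_all add: card_span2 assms)

lemma mem_span2: "p \<in> span2 p x" "x \<in> span2 p x"
proof -
  have "p = 1 *s p + 0 *s x" "x = 0 *s p + 1 *s x" by (simp_all add: vec_eq_iff)
  thus "p \<in> span2 p x" "x \<in> span2 p x" unfolding span2_def by blast+
qed

lemma span1_subset_pg_line_iff:
  assumes "pg_line L"
  shows "span1 p \<subseteq> L \<longleftrightarrow> p \<in> L"
proof
  assume "p \<in> L"
  obtain u w where L: "L = span2 u w" using assms unfolding pg_line_iff_span2 by auto
  show "span1 p \<subseteq> L"
  proof
    fix y assume "y \<in> span1 p"
    then obtain c where "y = c *s p + 0 *s p" unfolding span1_def by auto
    with span2_lin_comb[of p u w p c 0] \<open>p \<in> L\<close> L show "y \<in> L" by simp
  qed
qed (use self_in_span1 in blast)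

lemma card_pg_line:
  fixes L :: "('a::{finite,field}^3) set"
  assumes "pg_line L"
  shows "card L = CARD('a)^2"
  using assms card_span2 pg_line_iff_span2 by metis

lemma pg_line_through:
  fixes p :: "'a::field^3"
  assumes "p \<noteq> 0" "x \<notin> span1 p"
  shows "pg_line (span2 p x)" "span1 p \<subseteq> span2 p x" "x \<in> span2 p x"
proof -
  show line: "pg_line (span2 p x)" using indep2_if_notin_span1[OF assms] pg_line_iff_span2 by blast
  show "span1 p \<subseteq> span2 p x" "x \<in> span2 p x"
    using span1_subset_pg_line_iff[OF line] mem_span2 by blast+
qed

lemma pg_line_unique:
  fixes p :: "'a::{finite,field}^3"
  assumes "pg_line L1" "pg_line L2" "p \<noteq> 0" "p \<in> L1" "p \<in> L2"
    and "x \<in> L1" "x \<in> L2" "x \<notin> span1 p"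
  shows "L1 = L2"
proof -
  have indep: "indep2 p x" using indep2_if_notin_span1 assms(3,8) .
  have "L = span2 p x" if "pg_line L" "p \<in> L" "x \<in> L" for L
  proof -
    obtain u w where "indep2 u w" "L = span2 u w" using \<open>pg_line L\<close> pg_line_iff_span2 by blast
    with span2_eq_if_mem[OF _ indep] that show ?thesis by simp
  qed
  with assms show ?thesis by metis
qed

lemma notin_span1_if_distinct_point:
  fixes p x :: "'a::field^3"
  assumes "x \<noteq> 0" "span1 x \<noteq> span1 p"
  shows "x \<notin> span1 p"
  using span1_eq_if_mem assms by blast

lemma CARD_field_ge_2: "CARD('a::{finite,field}) \<ge> 2"
proof -
  have "card {0, 1 :: 'a} \<le> CARD('a)" by (rule card_mono) auto
  thus ?thesis by simp
qed

text \<open>The \<open>q\<^sup>3 - q\<close> vectors outside \<open>P\<close> are partitioned by the lines through \<open>P\<close>,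
  each contributing \<open>q\<^sup>2 - q\<close> of them.\<close>

lemma card_pg_lines_through_point:
  fixes P :: "('a::{finite,field}^3) set"
  assumes "pg_point P"
  shows "card {L. pg_line L \<and> P \<subseteq> L} = CARD('a) + 1"
proof -
  define q where "q = CARD('a)"
  obtain p where p: "p \<noteq> 0" "P = span1 p" using assms pg_point_iff_span1 by blast
  define LP where "LP = {L. pg_line L \<and> P \<subseteq> L}"
  have cover: "UNIV - P = (\<Union>L\<in>LP. L - P)"
    using pg_line_through[OF p(1)] p(2) unfolding LP_def by blast
  have "card (UNIV - P) = (\<Sum>L\<in>LP. card (L - P))"
    unfolding cover
  proof (intro card_UN_disjoint ballI impI)
    fix L1 L2 assume "L1 \<in> LP" "L2 \<in> LP" "L1 \<noteq> L2"
    with pg_line_unique[OF _ _ p(1)] self_in_span1[of p] p(2)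
    show "(L1 - P) \<inter> (L2 - P) = {}" unfolding LP_def by blast
  qed simp_all
  also have "\<dots> = (\<Sum>L\<in>LP. q^2 - q)"
    by (rule sum.cong) (auto simp: LP_def q_def card_Diff_subset card_pg_line card_span1 p)
  finally have "card LP * (q^2 - q) = q^3 - q"
    by (simp add: card_Diff_subset card_span1 p q_def)
  also have "\<dots> = (q + 1) * (q^2 - q)"
    by (simp add: algebra_simps power3_eq_cube power2_eq_square diff_mult_distrib2 diff_mult_distrib)
  finally have "card LP * (q^2 - q) = (q + 1) * (q^2 - q)" .
  moreover have "q^2 - q \<noteq> 0"
    using CARD_field_ge_2[where 'a='a] by (simp add: q_def power2_eq_square)
  ultimately have "card LP = q + 1" using mult_right_cancel by blast
  thus ?thesis unfolding LP_def q_def .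
qed

text \<open>The lines through a point \<open>P \<in> K\<close> partition \<open>K - {P}\<close>.\<close>

lemma sum_line_meet_card_through_point:
  fixes K :: "('a::{finite,field}^3) set set"
  assumes pts: "\<forall>Q\<in>K. pg_point Q" and "P \<in> K"
  shows "(\<Sum>L | pg_line L \<and> P \<subseteq> L. line_meet_card L K - 1) = card K - 1"
proof -
  obtain p where p: "p \<noteq> 0" "P = span1 p" using assms pg_point_iff_span1 by blast
  define LP where "LP = {L. pg_line L \<and> P \<subseteq> L}"
  define F where "F L = {Q\<in>K. Q \<subseteq> L} - {P}" for L
  have other_point: "\<exists>x. x \<noteq> 0 \<and> Q = span1 x \<and> x \<notin> span1 p" if "Q \<in> K" "Q \<noteq> P" for Q
  proof -
    have "pg_point Q" using pts that(1) by blast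
    then obtain x where x: "x \<noteq> 0" "Q = span1 x" unfolding pg_point_iff_span1 by blast
    moreover have "x \<notin> span1 p"
      using notin_span1_if_distinct_point[OF x(1)] x(2) p(2) that(2) by simp
    ultimately show ?thesis by blast
  qed
  have cover: "K - {P} = (\<Union>L\<in>LP. F L)"
  proof
    show "K - {P} \<subseteq> (\<Union>L\<in>LP. F L)"
    proof
      fix Q assume Q: "Q \<in> K - {P}"
      then obtain x where x: "x \<noteq> 0" "Q = span1 x" "x \<notin> span1 p"
        using other_point[of Q] by blast
      note line = pg_line_through[OF p(1) x(3)]
      have "span2 p x \<in> LP" using line(1,2) p(2) unfolding LP_def by simp
      moreover have "Q \<subseteq> span2 p x" using span1_subset_pg_line_iff[OF line(1)] line(3) x(2) by simp
      ultimately show "Q \<in> (\<Union>L\<in>LP. F L)" using Q unfolding F_def by blast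
    qed
  qed (unfold F_def, blast)
  have "card (K - {P}) = (\<Sum>L\<in>LP. card (F L))"
    unfolding cover
  proof (intro card_UN_disjoint ballI impI)
    fix L1 L2 assume L: "L1 \<in> LP" "L2 \<in> LP" "L1 \<noteq> L2"
    show "F L1 \<inter> F L2 = {}"
    proof (rule ccontr)
      assume "F L1 \<inter> F L2 \<noteq> {}"
      then obtain Q where Q: "Q \<in> K" "Q \<noteq> P" "Q \<subseteq> L1" "Q \<subseteq> L2" unfolding F_def by blast
      with other_point obtain x where x: "Q = span1 x" "x \<notin> span1 p" by blast
      have "p \<in> L1" "p \<in> L2" using L p(2) self_in_span1 unfolding LP_def by blast+
      moreover have "x \<in> L1" "x \<in> L2" using Q(3,4) x(1) self_in_span1 by blast+
      ultimately have "L1 = L2" using pg_line_unique[OF _ _ p(1) _ _ _ _ x(2)] L unfolding LP_def by blast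
      with L show False by simp
    qed
  qed simp_all
  also have "\<dots> = (\<Sum>L\<in>LP. line_meet_card L K - 1)"
  proof (rule sum.cong)
    fix L assume "L \<in> LP"
    with \<open>P \<in> K\<close> have "P \<in> {Q\<in>K. Q \<subseteq> L}" unfolding LP_def by simp
    thus "card (F L) = line_meet_card L K - 1" unfolding F_def line_meet_card_def by simp
  qed simp
  finally show ?thesis using \<open>P \<in> K\<close> unfolding LP_def by simp
qed

lemma sum_card_lines_through_eq_sum_line_meet_card:
  fixes K :: "('a::{finite,field}^3) set set"
  shows "(\<Sum>P\<in>K. card {L\<in>B. P \<subseteq> L}) = (\<Sum>L\<in>B. line_meet_card L K)"
proof -
  have "(\<Sum>P\<in>K. card {L\<in>B. P \<subseteq> L}) = (\<Sum>P\<in>K. \<Sum>L\<in>B. if P \<subseteq> L then 1 else 0)"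
    by (simp add: sum.inter_filter[symmetric])
  also have "\<dots> = (\<Sum>L\<in>B. \<Sum>P\<in>K. if P \<subseteq> L then 1 else 0)"
    by (rule sum.swap)
  also have "\<dots> = (\<Sum>L\<in>B. line_meet_card L K)"
    by (simp add: sum.inter_filter[symmetric] line_meet_card_def)
  finally show ?thesis .
qed

lemma two_secants_through_point:
  fixes K :: "('a::{finite,field}^3) set set"
  assumes q4: "CARD('a) \<ge> 4"
    and pts: "\<forall>P\<in>K. pg_point P"
    and cK: "card K = CARD('a) * (CARD('a) - 2)"
    and meets: "\<forall>L. pg_line L \<longrightarrow> line_meet_card L K \<in> {0, CARD('a) - 2, CARD('a) - 1}"
    and "P \<in> K"
  shows "card {L. pg_line L \<and> line_meet_card L K = CARD('a) - 1 \<and> P \<subseteq> L} = 2"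
proof -
  define q where "q = CARD('a)"
  define LP where "LP = {L. pg_line L \<and> P \<subseteq> L}"
  define b where "b = card {L\<in>LP. line_meet_card L K = q - 1}"
  have card_LP: "card LP = q + 1"
    using card_pg_lines_through_point pts \<open>P \<in> K\<close> unfolding LP_def q_def by blast
  have meet_minus_1: "line_meet_card L K - 1 = (q - 3) + (if line_meet_card L K = q - 1 then 1 else 0)"
    if "L \<in> LP" for L
  proof -
    have "P \<in> {Q\<in>K. Q \<subseteq> L}" using that \<open>P \<in> K\<close> unfolding LP_def by simp
    hence "line_meet_card L K \<noteq> 0" unfolding line_meet_card_def by auto
    with meets that q4 show ?thesis unfolding LP_def q_def by auto
  qed
  have "(\<Sum>L\<in>LP. line_meet_card L K - 1)
      = (\<Sum>L\<in>LP. (q - 3) + (if line_meet_card L K = q - 1 then 1 else 0))"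
    using meet_minus_1 by (rule sum.cong[OF refl])
  also have "\<dots> = (q + 1) * (q - 3) + b"
    by (simp add: sum.distrib sum.inter_filter[symmetric] b_def card_LP)
  finally have "(\<Sum>L\<in>LP. line_meet_card L K - 1) = (q + 1) * (q - 3) + b" .
  with sum_line_meet_card_through_point[OF pts \<open>P \<in> K\<close>] cK
  have "q * (q - 2) - 1 = (q + 1) * (q - 3) + b" unfolding LP_def q_def by simp
  moreover obtain k where "q = k + 4" using q4 unfolding q_def by (metis add.commute le_Suc_ex)
  ultimately have "b = 2" by (simp add: algebra_simps)
  moreover have "{L\<in>LP. line_meet_card L K = q - 1}
      = {L. pg_line L \<and> line_meet_card L K = q - 1 \<and> P \<subseteq> L}"
    unfolding LP_def by blast
  ultimately show ?thesis unfolding b_def q_def by simp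
qed

lemma not_dvd_twice_q_q_minus_2:
  fixes q :: nat
  assumes "q \<ge> 4"
  shows "\<not> (q - 1) dvd 2 * (q * (q - 2))"
proof
  assume dvd: "(q - 1) dvd 2 * (q * (q - 2))"
  obtain k where "q = k + 4" using assms by (metis add.commute le_Suc_ex)
  hence "2 * (q * (q - 2)) + 2 = 2 * (q - 1) * (q - 1)" by (simp add: algebra_simps)
  hence "(q - 1) dvd 2 * (q * (q - 2)) + 2" by (metis dvd_triv_right)
  with dvd have "(q - 1) dvd 2" by (simp only: dvd_add_right_iff)
  hence "q - 1 \<le> 2" by (rule dvd_imp_le) simp
  with assms show False by simp
qed

theorem mainTheorem15:
  fixes K :: "('a::{finite,field} ^ 3) set set"
  assumes "CARD('a) \<ge> 4"
    and "\<forall>P\<in>K. pg_point P"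
    and "card K = CARD('a) * (CARD('a) - 2)"
  shows "\<exists>L. pg_line L \<and>
           line_meet_card L K \<notin> {0, CARD('a) - 2, CARD('a) - 1}"
proof (rule ccontr)
  assume "\<not> ?thesis"
  hence meets: "\<forall>L. pg_line L \<longrightarrow> line_meet_card L K \<in> {0, CARD('a) - 2, CARD('a) - 1}" by auto
  define B where "B = {L. pg_line L \<and> line_meet_card L K = CARD('a) - 1}"
  have "(\<Sum>P\<in>K. card {L\<in>B. P \<subseteq> L}) = (\<Sum>P\<in>K. 2)"
    using two_secants_through_point[OF assms meets] by (intro sum.cong) (simp_all add: B_def)
  hence "2 * card K = (\<Sum>P\<in>K. card {L\<in>B. P \<subseteq> L})" by simp
  also have "\<dots> = (\<Sum>L\<in>B. line_meet_card L K)"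
    by (rule sum_card_lines_through_eq_sum_line_meet_card)
  also have "\<dots> = (\<Sum>L\<in>B. CARD('a) - 1)"
    by (rule sum.cong) (simp_all add: B_def)
  also have "\<dots> = card B * (CARD('a) - 1)" by simp
  finally have "(CARD('a) - 1) dvd 2 * card K" by simp
  with assms(3) not_dvd_twice_q_q_minus_2[OF assms(1)] show False by simp
qed

end
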